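(* Let $\mathcal R$ be a CCTRS. (1) If $s,t\in\mathcal T(\mathcal F,\mathcal V)$ and $s\sqsupset t$, then $\mathrm{label}(s)\rightharpoonup_\rhd\mathrm{label}(t)$. (2) If $s,t\in\mathcal T(\mathcal G,\mathcal V)$ and $s\rightharpoonup_\rhd t$, then $\mathrm{erase}(s)\sqsupset\mathrm{erase}(t)$.
   Context: Terms are built from a signature $\mathcal F$ and variables $\mathcal V$. An (oriented) conditional rewrite rule has the form $\ell\to r\Leftarrow a_1\approx b_1,\dots,a_k\approx b_k$ with $k\ge0$; $s\to_{\mathcal R}t$ iff there are a position $p$, a rule and a substitution $\sigma$ with $s|_p=\ell\sigma$, $t=s[r\sigma]_p$ and $a_j\sigma\to_{\mathcal R}^*b_j\sigma$ for all $j$ (formally the union of the usual approximations $\to_{\mathcal R_i}$). Defined symbols are root symbols of left-hand sides, others are constructors; constructor terms contain only constructors and variables. $\mathcal R{\restriction}f$ is the set of rules whose left-hand side has root $f$. A CCTRS is a set $\mathcal R$ of rules each of the form $f(\ell_1,\dots,\ell_n)\to r\Leftarrow a_1\approx b_1,\dots,a_k\approx b_k$ where $\ell_1,\dots,\ell_n,b_1,\dots,b_k$ are constructor terms, the terms $f(\ell_1,\dots,\ell_n),b_1,\dots,b_k$ pairwise have no common variables, $\mathrm{Var}(r)\subseteq\mathrm{Var}(\ell_1,\dots,\ell_n,b_1,\dots,b_k)$ and $\mathrm{Var}(a_i)\subseteq\mathrm{Var}(\ell_1,\dots,\ell_n,b_1,\dots,b_{i-1})$. Write $s\sqsupset t$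 (for unlabeled terms) if there are a position $p$, a rule $\ell\to r\Leftarrow a_1\approx b_1,\dots,a_k\approx b_k$, a substitution $\sigma$ and $1\le i\le k$ with $s|_p=\ell\sigma$, $a_j\sigma\to^* b_j\sigma$ for $1\le j<i$, and $t=a_i\sigma$. Labeled terms: the labeled signature $\mathcal G$ consists of the constructors of $\mathcal F$ together with a symbol $f_R$ (same arity as $f$) for every defined $f$ and every $R\subseteq\mathcal R{\restriction}f$. $\mathrm{label}(t)$ replaces every defined $f$ by $f_{\mathcal R\restriction f}$; $\mathrm{erase}$ removes all labels. A labeled normal form is a term built only from constructors, symbols $f_\emptyset$, and variables. The labeled step relation $\rightharpoonup$ is defined inductively: $s\rightharpoonup t$ if either (i) there are a position $p$ and a rule $\rho\colon\ell\to r\Leftarrow c$ with $s|_p=f_R(s_1,\dots,s_n)$, $\rho\in R$, $t=s[f_{R\setminus\{\rho\}}(s_1,\dots,s_n)]_p$, and linear labeled normal forms $u_1,\dots,u_n$ on fresh variables and $\sigma$ with $s|_p=f_R(u_1,\dots,u_n)\sigma$ and $f(\mathrm{erase}(u_1),\dots,\mathrm{erase}(u_n))$ not unifiable with $\ell$; or (ii) there are $p$, a rule $\rho\colon f(\ell_1,\dots,\ell_n)\to r\Leftarrow a_1\approx b_1,\dots,a_k\approx b_k$, $\sigma$ and $0\le j\le k$ with $s|_p=f_R(\ell_1\sigma,\dots,\ell_n\sigma)$, $\rho\in R$, $\mathrm{label}(a_i)\sigma\rightharpoonup^*b_i\sigma$ for $1\le i\le j$, and either $j=k$ and $t=s[\mathrm{label}(r)\sigma]_p$,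 or $j<k$, $\mathrm{label}(a_{j+1})\sigma\rightharpoonup^*u\tau$ for some linear labeled normal form $u$ with $\mathrm{erase}(u)$ not unifiable with $b_{j+1}$ and some $\tau$, and $t=s[f_{R\setminus\{\rho\}}(\ell_1\sigma,\dots,\ell_n\sigma)]_p$. Finally $s\rightharpoonup_\rhd t$ if there are a position $p$, a rule $\rho$ as in (ii), a substitution $\sigma$ and $0\le j<k$ with $s|_p=f_R(\ell_1\sigma,\dots,\ell_n\sigma)$, $\rho\in R$, $\mathrm{label}(a_i)\sigma\rightharpoonup^*b_i\sigma$ for $1\le i\le j$, and $t=\mathrm{label}(a_{j+1})\sigma$. *)

theory Defs
  imports Main
begin

datatype ('f, 'v) "term" = Var 'v | Fun 'f "('f, 'v) term list"

fun vars_list :: "('f, 'v) term \<Rightarrow> 'v list" where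
  "vars_list (Var x) = [x]"
| "vars_list (Fun f ts) = concat (map vars_list ts)"

definition vars :: "('f, 'v) term \<Rightarrow> 'v set" where
  "vars t = set (vars_list t)"

definition linear :: "('f, 'v) term \<Rightarrow> bool" where
  "linear t \<longleftrightarrow> distinct (vars_list t)"

fun funs :: "('f, 'v) term \<Rightarrow> 'f set" where
  "funs (Var x) = {}"
| "funs (Fun f ts) = insert f (\<Union>t \<in> set ts. funs t)"

fun root :: "('f, 'v) term \<Rightarrow> 'f option" where
  "root (Var x) = None"
| "root (Fun f ts) = Some f"

fun subst_apply :: "('f, 'v) term \<Rightarrow> ('v \<Rightarrow> ('f, 'w) term) \<Rightarrow> ('f, 'w) term"
  (infixl "\<cdot>" 67) where
  "Var x \<cdot> \<sigma> = \<sigma> x"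
| "Fun f ts \<cdot> \<sigma> = Fun f (map (\<lambda>t. t \<cdot> \<sigma>) ts)"

text \<open>Positions are lists of (0-based) argument indices.\<close>
inductive is_pos :: "nat list \<Rightarrow> ('f, 'v) term \<Rightarrow> bool" where
  "is_pos [] t"
| "i < length ts \<Longrightarrow> is_pos p (ts ! i) \<Longrightarrow> is_pos (i # p) (Fun f ts)"

definition poss :: "('f, 'v) term \<Rightarrow> nat list set" where
  "poss t = {p. is_pos p t}"

fun subt_at :: "('f, 'v) term \<Rightarrow> nat list \<Rightarrow> ('f, 'v) term" (infixl "|'_" 67) where
  "t |_ [] = t"
| "Fun f ts |_ (i # p) = (ts ! i) |_ p"
| "Var x |_ (i # p) = Var x"

fun replace_at :: "('f, 'v) term \<Rightarrow> nat list \<Rightarrow> ('f, 'v) term \<Rightarrow> ('f, 'v) term" where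
  "replace_at t [] s = s"
| "replace_at (Fun f ts) (i # p) s = Fun f (ts[i := replace_at (ts ! i) p s])"
| "replace_at (Var x) (i # p) s = Var x"

text \<open>Unifiability of two terms after renaming them apart (the terms being compared
  in the paper have pairwise disjoint, fresh variables).\<close>
definition unifiable_apart :: "('f, 'v) term \<Rightarrow> ('f, 'v) term \<Rightarrow> bool" where
  "unifiable_apart s t \<longleftrightarrow> (\<exists>(\<sigma> :: 'v \<Rightarrow> ('f, 'v) term) \<tau>. s \<cdot> \<sigma> = t \<cdot> \<tau>)"

text \<open>A rule  l \<rightarrow> r \<Leftarrow> a1 \<approx> b1, ..., ak \<approx> bk  is a triple (l, r, [(a1,b1),...,(ak,bk)]).\<close>
type_synonym ('f, 'v) crule =
  "('f, 'v) term \<times> ('f, 'v) term \<times> (('f, 'v) term \<times> ('f, 'v) term) list"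

definition lhs :: "('f, 'v) crule \<Rightarrow> ('f, 'v) term" where "lhs \<rho> = fst \<rho>"
definition rhs :: "('f, 'v) crule \<Rightarrow> ('f, 'v) term" where "rhs \<rho> = fst (snd \<rho>)"
definition conds :: "('f, 'v) crule \<Rightarrow> (('f, 'v) term \<times> ('f, 'v) term) list" where
  "conds \<rho> = snd (snd \<rho>)"

definition defined :: "('f, 'v) crule set \<Rightarrow> 'f set" where
  "defined R = {f. \<exists>\<rho> \<in> R. root (lhs \<rho>) = Some f}"

definition constructor_term :: "('f, 'v) crule set \<Rightarrow> ('f, 'v) term \<Rightarrow> bool" where
  "constructor_term R t \<longleftrightarrow> funs t \<inter> defined R = {}"

definition rules_of :: "('f, 'v) crule set \<Rightarrow> 'f \<Rightarrow> ('f, 'v) crule set" where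
  "rules_of R f = {\<rho> \<in> R. root (lhs \<rho>) = Some f}"

text \<open>The conditional rewrite relation (least fixed point = union of the approximations).\<close>
inductive cstep :: "('f, 'v) crule set \<Rightarrow> ('f, 'v) term \<Rightarrow> ('f, 'v) term \<Rightarrow> bool"
  for R where
  "\<lbrakk> p \<in> poss s; \<rho> \<in> R; s |_ p = lhs \<rho> \<cdot> \<sigma>; t = replace_at s p (rhs \<rho> \<cdot> \<sigma>);
     \<forall>i < length (conds \<rho>). (cstep R)\<^sup>*\<^sup>* (fst (conds \<rho> ! i) \<cdot> \<sigma>) (snd (conds \<rho> ! i) \<cdot> \<sigma>) \<rbrakk>
   \<Longrightarrow> cstep R s t"

definition cctrs :: "('f, 'v) crule set \<Rightarrow> bool" where
  "cctrs R \<longleftrightarrow> (\<forall>\<rho> \<in> R. \<exists>f ls r cs. \<rho> = (Fun f ls, r, cs) \<and>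
     (\<forall>l \<in> set ls. constructor_term R l) \<and>
     (\<forall>i < length cs. constructor_term R (snd (cs ! i))) \<and>
     (\<forall>i < length cs. vars (Fun f ls) \<inter> vars (snd (cs ! i)) = {}) \<and>
     (\<forall>i < length cs. \<forall>j < length cs. i \<noteq> j \<longrightarrow> vars (snd (cs ! i)) \<inter> vars (snd (cs ! j)) = {}) \<and>
     vars r \<subseteq> vars (Fun f ls) \<union> (\<Union>i < length cs. vars (snd (cs ! i))) \<and>
     (\<forall>i < length cs. vars (fst (cs ! i)) \<subseteq> vars (Fun f ls) \<union> (\<Union>j < i. vars (snd (cs ! j)))))"

definition sqsup :: "('f, 'v) crule set \<Rightarrow> ('f, 'v) term \<Rightarrow> ('f, 'v) term \<Rightarrow> bool" where
  "sqsup R s t \<longleftrightarrow> (\<exists>p \<rho> \<sigma> i. p \<in> poss s \<and> \<rho> \<in> R \<and> s |_ p = lhs \<rho> \<cdot> \<sigma> \<and>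
     i < length (conds \<rho>) \<and>
     (\<forall>j < i. (cstep R)\<^sup>*\<^sup>* (fst (conds \<rho> ! j) \<cdot> \<sigma>) (snd (conds \<rho> ! j) \<cdot> \<sigma>)) \<and>
     t = fst (conds \<rho> ! i) \<cdot> \<sigma>)"

text \<open>Labeled symbols: Con f (a constructor) or Lab f R (the symbol f_R).\<close>
datatype ('f, 'v) lsym = Con 'f | Lab 'f "('f, 'v) crule set"

type_synonym ('f, 'v) lterm = "(('f, 'v) lsym, 'v) term"

definition label :: "('f, 'v) crule set \<Rightarrow> ('f, 'w) term \<Rightarrow> (('f, 'v) lsym, 'w) term" where
  "label R t = map_term (\<lambda>f. if f \<in> defined R then Lab f (rules_of R f) else Con f) id t"

fun erase_sym :: "('f, 'v) lsym \<Rightarrow> 'f" where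
  "erase_sym (Con f) = f"
| "erase_sym (Lab f S) = f"

definition erase :: "(('f, 'v) lsym, 'w) term \<Rightarrow> ('f, 'w) term" where
  "erase t = map_term erase_sym id t"

fun in_G :: "('f, 'v) crule set \<Rightarrow> ('f, 'v) lsym \<Rightarrow> bool" where
  "in_G R (Con f) \<longleftrightarrow> f \<notin> defined R"
| "in_G R (Lab f S) \<longleftrightarrow> f \<in> defined R \<and> S \<subseteq> rules_of R f"

definition lterm_G :: "('f, 'v) crule set \<Rightarrow> ('f, 'v) lterm \<Rightarrow> bool" where
  "lterm_G R t \<longleftrightarrow> (\<forall>g \<in> funs t. in_G R g)"

fun lnf_sym :: "('f, 'v) crule set \<Rightarrow> ('f, 'v) lsym \<Rightarrow> bool" where
  "lnf_sym R (Con f) \<longleftrightarrow> f \<notin> defined R"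
| "lnf_sym R (Lab f S) \<longleftrightarrow> f \<in> defined R \<and> S = {}"

definition lnf :: "('f, 'v) crule set \<Rightarrow> ('f, 'v) lterm \<Rightarrow> bool" where
  "lnf R t \<longleftrightarrow> (\<forall>g \<in> funs t. lnf_sym R g)"

inductive lstep :: "('f, 'v) crule set \<Rightarrow> ('f, 'v) lterm \<Rightarrow> ('f, 'v) lterm \<Rightarrow> bool"
  for R where
  discard_unif:
  "\<lbrakk> p \<in> poss s; s |_ p = Fun (Lab f S) ss; \<rho> \<in> S;
     t = replace_at s p (Fun (Lab f (S - {\<rho>})) ss);
     length us = length ss; \<forall>u \<in> set us. lnf R u; linear (Fun (Lab f S) us);
     Fun (Lab f S) ss = Fun (Lab f S) us \<cdot> \<sigma>;
     \<not> unifiable_apart (Fun f (map erase us)) (lhs \<rho>) \<rbrakk>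
   \<Longrightarrow> lstep R s t"
| apply_rule:
  "\<lbrakk> p \<in> poss s; \<rho> = (Fun f ls, r, cs); \<rho> \<in> S;
     s |_ p = Fun (Lab f S) (map (\<lambda>l. label R l \<cdot> \<sigma>) ls);
     j \<le> length cs;
     \<forall>i < j. (lstep R)\<^sup>*\<^sup>* (label R (fst (cs ! i)) \<cdot> \<sigma>) (label R (snd (cs ! i)) \<cdot> \<sigma>);
     (j = length cs \<and> t = replace_at s p (label R r \<cdot> \<sigma>)) \<or>
     (j < length cs \<and>
      (\<exists>u \<tau>. lnf R u \<and> linear u \<and> (lstep R)\<^sup>*\<^sup>* (label R (fst (cs ! j)) \<cdot> \<sigma>) (u \<cdot> \<tau>) \<and>
             \<not> unifiable_apart (erase u) (snd (cs ! j))) \<and>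
      t = replace_at s p (Fun (Lab f (S - {\<rho>})) (map (\<lambda>l. label R l \<cdot> \<sigma>) ls))) \<rbrakk>
   \<Longrightarrow> lstep R s t"

definition lstep_sub :: "('f, 'v) crule set \<Rightarrow> ('f, 'v) lterm \<Rightarrow> ('f, 'v) lterm \<Rightarrow> bool" where
  "lstep_sub R s t \<longleftrightarrow> (\<exists>p f ls r cs S \<sigma> j. p \<in> poss s \<and> (Fun f ls, r, cs) \<in> S \<and>
     s |_ p = Fun (Lab f S) (map (\<lambda>l. label R l \<cdot> \<sigma>) ls) \<and> j < length cs \<and>
     (\<forall>i < j. (lstep R)\<^sup>*\<^sup>* (label R (fst (cs ! i)) \<cdot> \<sigma>) (label R (snd (cs ! i)) \<cdot> \<sigma>)) \<and>
     t = label R (fst (cs ! j)) \<cdot> \<sigma>)"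

end

theory Submission
  imports Defs
begin

text \<open>
  Labelling commutes with substitutions, subterms and replacement, so an unlabelled rewrite step
  with a rule \<open>f(l\<^sub>1, ..., l\<^sub>n) \<rightarrow> r \<Leftarrow> c\<close> is simulated by a labelled step applying the same rule to
  the fully labelled redex; this gives (1).

  Conversely, as long as every label consists of rules of R (the invariant \<open>labels_in\<close>), erasing
  turns a labelled step into at most one unlabelled step: discarding a rule from a label does not
  change the erased term, and applying a rule erases to a conditional rewrite step. The invariant
  itself is preserved because the variable conditions of a CCTRS let it flow from the left-hand
  side through the conditions \<open>b\<^sub>1, ..., b\<^sub>i\<close> to the next condition and to the right-hand side.
\<close>

lemma vars_Var [simp]: "vars (Var x) = {x}"
  by (simp add: vars_def)

lemma vars_Fun [simp]: "vars (Fun f ts) = (\<Union>t \<in> set ts. vars t)"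
  by (simp add: vars_def)

lemma vars_map_term [simp]: "vars (map_term h id t) = vars t"
  by (induction t) auto

lemma funs_map_term: "funs (map_term h g t) = h ` funs t"
  by (induction t) auto

lemma funs_subst: "funs (t \<cdot> \<sigma>) = funs t \<union> (\<Union>x \<in> vars t. funs (\<sigma> x))"
  by (induction t) auto

lemma map_term_subst: "map_term h id (t \<cdot> \<sigma>) = map_term h id t \<cdot> (map_term h id \<circ> \<sigma>)"
  by (induction t) auto

lemma is_pos_Cons:
  "is_pos (i # p) t \<longleftrightarrow> (\<exists>f ts. t = Fun f ts \<and> i < length ts \<and> is_pos p (ts ! i))"
  by (auto elim: is_pos.cases intro: is_pos.intros)

lemma is_pos_map_term [simp]: "is_pos p (map_term h g t) \<longleftrightarrow> is_pos p t"
proof (induction p arbitrary: t)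
  case Nil
  then show ?case by (simp add: is_pos.intros)
next
  case (Cons i p)
  then show ?case by (cases t) (auto simp: is_pos_Cons)
qed

lemma subt_at_map_term: "is_pos p t \<Longrightarrow> map_term h g t |_ p = map_term h g (t |_ p)"
  by (induction p arbitrary: t) (auto simp: is_pos_Cons)

lemma replace_at_map_term:
  "map_term h g (replace_at t p s) = replace_at (map_term h g t) p (map_term h g s)"
proof (induction p arbitrary: t)
  case Nil
  then show ?case by simp
next
  case (Cons i p)
  show ?case
  proof (cases t)
    case (Fun f ts)
    then show ?thesis
      using Cons by (cases "i < length ts") (auto simp: map_update list_update_beyond)
  qed simp
qed

lemma replace_at_subt_at [simp]: "is_pos p t \<Longrightarrow> replace_at t p (t |_ p) = t"
  by (induction p arbitrary: t) (auto simp: is_pos_Cons)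

lemma funs_subt_at: "is_pos p t \<Longrightarrow> funs (t |_ p) \<subseteq> funs t"
  by (induction p arbitrary: t) (fastforce simp: is_pos_Cons)+

lemma funs_replace_at: "funs (replace_at t p s) \<subseteq> funs t \<union> funs s"
proof (induction p arbitrary: t)
  case Nil
  then show ?case by simp
next
  case (Cons i p)
  show ?case
  proof (cases t)
    case (Fun f ts)
    show ?thesis
    proof (cases "i < length ts")
      case True
      have "set (ts[i := replace_at (ts ! i) p s]) \<subseteq> insert (replace_at (ts ! i) p s) (set ts)"
        by (rule set_update_subset_insert)
      moreover have "funs (ts ! i) \<subseteq> funs t" using True Fun by auto
      ultimately show ?thesis using Fun Cons.IH[of "ts ! i"] by fastforce
    qed (auto simp: Fun list_update_beyond)
  qed simp
qed

lemma rtranclp_simulation: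
  assumes "r\<^sup>*\<^sup>* x y" and "I x"
    and "\<And>a b. r a b \<Longrightarrow> I a \<Longrightarrow> I b \<and> s\<^sup>*\<^sup>* (f a) (f b)"
  shows "I y \<and> s\<^sup>*\<^sup>* (f x) (f y)"
  using assms(1)
proof (induction rule: rtranclp_induct)
  case base
  then show ?case using assms(2) by simp
next
  case (step y z)
  then show ?case using assms(3)[of y z] by (meson rtranclp_trans)
qed

lemma erase_label [simp]: "erase (label R t) = t"
proof -
  have "map_term (erase_sym \<circ> (\<lambda>f. if f \<in> defined R then Lab f (rules_of R f) else Con f)) id t = t"
    by (induction t) (auto simp: map_idI)
  then show ?thesis by (simp add: erase_def label_def term.map_comp)
qed

lemma label_subst: "label R (t \<cdot> \<sigma>) = label R t \<cdot> (label R \<circ> \<sigma>)"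
  unfolding label_def by (rule map_term_subst)

lemma erase_subst: "erase (t \<cdot> \<sigma>) = erase t \<cdot> (erase \<circ> \<sigma>)"
  unfolding erase_def by (rule map_term_subst)

lemma erase_label_subst [simp]: "erase (label R t \<cdot> \<sigma>) = t \<cdot> (erase \<circ> \<sigma>)"
  by (simp add: erase_subst)

lemma vars_label [simp]: "vars (label R t) = vars t"
  unfolding label_def by (rule vars_map_term)

lemma label_Fun_defined:
  "f \<in> defined R \<Longrightarrow> label R (Fun f ts) = Fun (Lab f (rules_of R f)) (map (label R) ts)"
  unfolding label_def by simp

lemma erase_Fun [simp]: "erase (Fun g ts) = Fun (erase_sym g) (map erase ts)"
  unfolding erase_def by simp

lemma cctrs_ruleE:
  assumes "cctrs R" and "\<rho> \<in> R"
  obtains f ls r cs where "\<rho> = (Fun f ls, r, cs)"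
proof -
  from bspec[OF assms(1)[unfolded cctrs_def] assms(2)] obtain f ls r cs where "\<rho> = (Fun f ls, r, cs)"
    by (elim exE conjE)
  then show thesis by (rule that)
qed

lemma cctrs_rule_vars:
  assumes "cctrs R" and "(Fun f ls, r, cs) \<in> R"
  shows "\<forall>i < length cs. vars (fst (cs ! i)) \<subseteq> vars (Fun f ls) \<union> (\<Union>j < i. vars (snd (cs ! j)))"
    and "vars r \<subseteq> vars (Fun f ls) \<union> (\<Union>i < length cs. vars (snd (cs ! i)))"
proof -
  from bspec[OF assms(1)[unfolded cctrs_def] assms(2)] obtain f' ls' r' cs'
    where "(Fun f ls, r, cs) = (Fun f' ls', r', cs')"
      and "vars r' \<subseteq> vars (Fun f' ls') \<union> (\<Union>i < length cs'. vars (snd (cs' ! i)))"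
      and "\<forall>i < length cs'. vars (fst (cs' ! i)) \<subseteq> vars (Fun f' ls') \<union> (\<Union>j < i. vars (snd (cs' ! j)))"
    by (elim exE conjE) blast
  then show "\<forall>i < length cs. vars (fst (cs ! i)) \<subseteq> vars (Fun f ls) \<union> (\<Union>j < i. vars (snd (cs ! j)))"
    and "vars r \<subseteq> vars (Fun f ls) \<union> (\<Union>i < length cs. vars (snd (cs ! i)))"
    by simp_all
qed

lemma rule_in_rules_of:
  assumes "(Fun f ls, r, cs) \<in> R"
  shows "f \<in> defined R" and "(Fun f ls, r, cs) \<in> rules_of R f"
  using assms unfolding defined_def rules_of_def lhs_def by force+

lemma label_redex:
  assumes "p \<in> poss s" and "s |_ p = Fun f ls \<cdot> \<sigma>" and "f \<in> defined R"
  shows "p \<in> poss (label R s)"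
    and "label R s |_ p = Fun (Lab f (rules_of R f)) (map (\<lambda>l. label R l \<cdot> (label R \<circ> \<sigma>)) ls)"
proof -
  show "p \<in> poss (label R s)" using assms(1) by (simp add: poss_def label_def)
  have "label R s |_ p = label R (s |_ p)"
    using assms(1) by (simp add: poss_def label_def subt_at_map_term)
  then show "label R s |_ p = Fun (Lab f (rules_of R f)) (map (\<lambda>l. label R l \<cdot> (label R \<circ> \<sigma>)) ls)"
    using assms(2,3) by (simp add: label_Fun_defined label_subst)
qed

lemma label_cond_steps:
  assumes "\<forall>i < j. r\<^sup>*\<^sup>* (fst (cs ! i) \<cdot> \<sigma>) (snd (cs ! i) \<cdot> \<sigma>)"
    and "\<And>s t. r s t \<Longrightarrow> lstep R (label R s) (label R t)"
  shows "\<forall>i < j. (lstep R)\<^sup>*\<^sup>* (label R (fst (cs ! i)) \<cdot> (label R \<circ> \<sigma>)) (label R (snd (cs ! i)) \<cdot> (label R \<circ> \<sigma>))"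
proof (intro allI impI)
  fix i assume "i < j"
  then have "(lstep R)\<^sup>*\<^sup>* (label R (fst (cs ! i) \<cdot> \<sigma>)) (label R (snd (cs ! i) \<cdot> \<sigma>))"
    using assms rtranclp_simulation[where I = "\<lambda>_. True" and f = "label R"] by blast
  then show "(lstep R)\<^sup>*\<^sup>* (label R (fst (cs ! i)) \<cdot> (label R \<circ> \<sigma>)) (label R (snd (cs ! i)) \<cdot> (label R \<circ> \<sigma>))"
    by (simp add: label_subst)
qed

lemma cstep_imp_lstep_label:
  assumes "cctrs R" and "cstep R s t"
  shows "lstep R (label R s) (label R t)"
  using assms(2)
proof (induction rule: cstep.induct)
  case (1 p s \<rho> \<sigma> t)
  from assms(1) \<open>\<rho> \<in> R\<close> obtain f ls r cs where \<rho>: "\<rho> = (Fun f ls, r, cs)"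
    by (rule cctrs_ruleE)
  note redex = label_redex[OF \<open>p \<in> poss s\<close> _ rule_in_rules_of(1)[OF \<open>\<rho> \<in> R\<close>[unfolded \<rho>]]]
  have conds: "\<forall>i < length cs. (lstep R)\<^sup>*\<^sup>* (label R (fst (cs ! i)) \<cdot> (label R \<circ> \<sigma>))
      (label R (snd (cs ! i)) \<cdot> (label R \<circ> \<sigma>))"
    by (rule label_cond_steps[where r = "\<lambda>s t. cstep R s t \<and> lstep R (label R s) (label R t)"])
      (use 1(5) \<rho> in \<open>auto simp: conds_def\<close>)
  have "label R t = replace_at (label R s) p (label R (r \<cdot> \<sigma>))"
    using 1(4) \<rho> by (simp add: label_def replace_at_map_term rhs_def)
  then have "label R t = replace_at (label R s) p (label R r \<cdot> (label R \<circ> \<sigma>))"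
    by (simp add: label_subst)
  then show ?case
    using 1(3) \<rho> rule_in_rules_of(2)[OF \<open>\<rho> \<in> R\<close>[unfolded \<rho>]] redex conds
    by (intro lstep.apply_rule[where \<sigma> = "label R \<circ> \<sigma>" and j = "length cs"]) (auto simp: lhs_def)
qed

lemma sqsup_imp_lstep_sub_label:
  assumes "cctrs R" and "sqsup R s t"
  shows "lstep_sub R (label R s) (label R t)"
proof -
  from assms(2) obtain p \<rho> \<sigma> i where
    "p \<in> poss s" "\<rho> \<in> R" "s |_ p = lhs \<rho> \<cdot> \<sigma>" "i < length (conds \<rho>)"
    and earlier: "\<forall>j < i. (cstep R)\<^sup>*\<^sup>* (fst (conds \<rho> ! j) \<cdot> \<sigma>) (snd (conds \<rho> ! j) \<cdot> \<sigma>)"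
    and t: "t = fst (conds \<rho> ! i) \<cdot> \<sigma>"
    unfolding sqsup_def by blast
  from assms(1) \<open>\<rho> \<in> R\<close> obtain f ls r cs where \<rho>: "\<rho> = (Fun f ls, r, cs)"
    by (rule cctrs_ruleE)
  have rule: "(Fun f ls, r, cs) \<in> R" using \<open>\<rho> \<in> R\<close> \<rho> by simp
  have "s |_ p = Fun f ls \<cdot> \<sigma>" using \<open>s |_ p = lhs \<rho> \<cdot> \<sigma>\<close> \<rho> by (simp add: lhs_def)
  note redex = label_redex[OF \<open>p \<in> poss s\<close> this rule_in_rules_of(1)[OF rule]]
  have "\<forall>j < i. (lstep R)\<^sup>*\<^sup>* (label R (fst (cs ! j)) \<cdot> (label R \<circ> \<sigma>))
      (label R (snd (cs ! j)) \<cdot> (label R \<circ> \<sigma>))"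
    by (rule label_cond_steps[OF _ cstep_imp_lstep_label[OF assms(1)]]) (use earlier \<rho> in \<open>simp add: conds_def\<close>)
  moreover have "i < length cs" using \<open>i < length (conds \<rho>)\<close> \<rho> by (simp add: conds_def)
  moreover have "label R t = label R (fst (cs ! i)) \<cdot> (label R \<circ> \<sigma>)"
    using t \<rho> by (simp add: conds_def label_subst)
  ultimately show ?thesis
    using redex rule_in_rules_of(2)[OF rule] unfolding lstep_sub_def by blast
qed

definition labels_in :: "('f, 'v) crule set \<Rightarrow> (('f, 'v) lsym, 'w) term \<Rightarrow> bool" where
  "labels_in R u \<longleftrightarrow> (\<forall>f S. Lab f S \<in> funs u \<longrightarrow> S \<subseteq> R)"

lemma labels_in_Fun [simp]:
  "labels_in R (Fun g ts) \<longleftrightarrow> (\<forall>f S. g = Lab f S \<longrightarrow> S \<subseteq> R) \<and> (\<forall>t \<in> set ts. labels_in R t)"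
  unfolding labels_in_def by fastforce

lemma labels_in_subst [simp]:
  "labels_in R (t \<cdot> \<sigma>) \<longleftrightarrow> labels_in R t \<and> (\<forall>x \<in> vars t. labels_in R (\<sigma> x))"
  unfolding labels_in_def funs_subst by fastforce

lemma labels_in_label [simp]: "labels_in R (label R t)"
  unfolding labels_in_def label_def funs_map_term by (auto simp: rules_of_def)

lemma labels_in_subt_at: "is_pos p u \<Longrightarrow> labels_in R u \<Longrightarrow> labels_in R (u |_ p)"
  unfolding labels_in_def using funs_subt_at by (meson subsetD)

lemma labels_in_replace_at: "labels_in R u \<Longrightarrow> labels_in R w \<Longrightarrow> labels_in R (replace_at u p w)"
  unfolding labels_in_def using funs_replace_at[of u p w] by (meson Un_iff subsetD)

lemma labels_in_if_lterm_G: "lterm_G R s \<Longrightarrow> labels_in R s"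
  unfolding lterm_G_def labels_in_def
proof (intro allI impI)
  fix f S
  assume "\<forall>g \<in> funs s. in_G R g" and "Lab f S \<in> funs s"
  then have "S \<subseteq> rules_of R f" by fastforce
  then show "S \<subseteq> R" unfolding rules_of_def by blast
qed

lemma labels_in_redex:
  assumes "labels_in R s" and "is_pos p s" and "s |_ p = Fun (Lab f S) (map (\<lambda>l. label R l \<cdot> \<sigma>) ls)"
  shows "S \<subseteq> R" and "\<forall>x \<in> vars (Fun f ls). labels_in R (\<sigma> x)"
  using labels_in_subt_at[OF assms(2,1)] assms(3) by auto

lemma erase_redex:
  assumes "is_pos p s" and "s |_ p = Fun g (map (\<lambda>l. label R l \<cdot> \<sigma>) ls)"
  shows "p \<in> poss (erase s)" and "erase s |_ p = Fun (erase_sym g) ls \<cdot> (erase \<circ> \<sigma>)"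
proof -
  show "p \<in> poss (erase s)" using assms(1) by (simp add: poss_def erase_def)
  have "erase s |_ p = erase (s |_ p)" using assms(1) by (simp add: erase_def subt_at_map_term)
  then show "erase s |_ p = Fun (erase_sym g) ls \<cdot> (erase \<circ> \<sigma>)" using assms(2) by simp
qed

lemma erase_replace_label:
  assumes "is_pos p u" and "u |_ p = Fun (Lab f S) ss"
  shows "erase (replace_at u p (Fun (Lab f S') ss)) = erase u"
proof -
  have "erase (Fun (Lab f S') ss) = erase (u |_ p)" using assms(2) by simp
  also have "\<dots> = erase u |_ p" using assms(1) by (simp add: erase_def subt_at_map_term)
  finally have relabelled: "erase (Fun (Lab f S') ss) = erase u |_ p" .
  have "erase (replace_at u p (Fun (Lab f S') ss)) = replace_at (erase u) p (erase (Fun (Lab f S') ss))"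
    unfolding erase_def by (rule replace_at_map_term)
  also have "\<dots> = erase u" using assms(1) by (simp only: relabelled) (simp add: erase_def)
  finally show ?thesis .
qed

lemma labels_in_replace_label:
  assumes "is_pos p u" and "u |_ p = Fun (Lab f S) ss" and "S' \<subseteq> S" and "labels_in R u"
  shows "labels_in R (replace_at u p (Fun (Lab f S') ss))"
  using labels_in_subt_at[OF assms(1,4)] assms(2,3) by (auto intro: labels_in_replace_at[OF assms(4)])

lemma erase_cond_steps:
  assumes "cctrs R" and "(Fun f ls, r, cs) \<in> R" and "\<forall>x \<in> vars (Fun f ls). labels_in R (\<sigma> x)"
    and "j \<le> length cs"
    and "\<forall>i < j. step\<^sup>*\<^sup>* (label R (fst (cs ! i)) \<cdot> \<sigma>) (label R (snd (cs ! i)) \<cdot> \<sigma>)"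
    and "\<And>u v. step u v \<Longrightarrow> labels_in R u \<Longrightarrow> labels_in R v \<and> (cstep R)\<^sup>*\<^sup>* (erase u) (erase v)"
  shows "(\<forall>i < j. (cstep R)\<^sup>*\<^sup>* (fst (cs ! i) \<cdot> (erase \<circ> \<sigma>)) (snd (cs ! i) \<cdot> (erase \<circ> \<sigma>))) \<and>
    (\<forall>x \<in> vars (Fun f ls) \<union> (\<Union>i < j. vars (snd (cs ! i))). labels_in R (\<sigma> x))"
  using assms(4,5)
proof (induction j)
  case 0
  then show ?case using assms(3) by simp
next
  case (Suc j)
  have "j \<le> length cs" using Suc.prems(1) by simp
  moreover have "\<forall>i < j. step\<^sup>*\<^sup>* (label R (fst (cs ! i)) \<cdot> \<sigma>) (label R (snd (cs ! i)) \<cdot> \<sigma>)"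
    using Suc.prems(2) less_SucI by blast
  ultimately have IH:
    "(\<forall>i < j. (cstep R)\<^sup>*\<^sup>* (fst (cs ! i) \<cdot> (erase \<circ> \<sigma>)) (snd (cs ! i) \<cdot> (erase \<circ> \<sigma>))) \<and>
     (\<forall>x \<in> vars (Fun f ls) \<union> (\<Union>i < j. vars (snd (cs ! i))). labels_in R (\<sigma> x))"
    by (rule Suc.IH)
  have "vars (fst (cs ! j)) \<subseteq> vars (Fun f ls) \<union> (\<Union>i < j. vars (snd (cs ! i)))"
    using cctrs_rule_vars(1)[OF assms(1,2)] Suc.prems(1) by simp
  then have "labels_in R (label R (fst (cs ! j)) \<cdot> \<sigma>)" using IH by auto
  with Suc.prems(2) have "labels_in R (label R (snd (cs ! j)) \<cdot> \<sigma>) \<and>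
      (cstep R)\<^sup>*\<^sup>* (erase (label R (fst (cs ! j)) \<cdot> \<sigma>)) (erase (label R (snd (cs ! j)) \<cdot> \<sigma>))"
    using rtranclp_simulation[where I = "labels_in R" and f = erase] assms(6) by blast
  then show ?case using IH by (auto simp: less_Suc_eq lessThan_Suc comp_def)
qed

lemma lstep_imp_cstep_erase:
  assumes "cctrs R" and "lstep R u v"
  shows "labels_in R u \<longrightarrow> labels_in R v \<and> (cstep R)\<^sup>*\<^sup>* (erase u) (erase v)"
  using assms(2)
proof (induction rule: lstep.induct)
  case (discard_unif p s f S ss \<rho> t us \<sigma>)
  then have "is_pos p s" by (simp add: poss_def)
  then show ?case
    using erase_replace_label labels_in_replace_label discard_unif(2,4) by fastforce
next
  case (apply_rule p s \<rho> f ls r cs S \<sigma> j t)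
  show ?case
  proof
    assume "labels_in R s"
    have "is_pos p s" using \<open>p \<in> poss s\<close> by (simp add: poss_def)
    note redex_labels = labels_in_redex[OF \<open>labels_in R s\<close> this apply_rule(4)]
    have rule: "(Fun f ls, r, cs) \<in> R" using redex_labels(1) apply_rule(2,3) by blast
    have conds:
      "\<forall>i < j. (cstep R)\<^sup>*\<^sup>* (fst (cs ! i) \<cdot> (erase \<circ> \<sigma>)) (snd (cs ! i) \<cdot> (erase \<circ> \<sigma>))"
      "\<forall>x \<in> vars (Fun f ls) \<union> (\<Union>i < j. vars (snd (cs ! i))). labels_in R (\<sigma> x)"
      using erase_cond_steps[OF assms(1) rule redex_labels(2) \<open>j \<le> length cs\<close> apply_rule(6)]
      by blast+
    show "labels_in R t \<and> (cstep R)\<^sup>*\<^sup>* (erase s) (erase t)"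
    proof (cases "j = length cs")
      case True
      then have t: "t = replace_at s p (label R r \<cdot> \<sigma>)" using apply_rule(7) by simp
      have "labels_in R (label R r \<cdot> \<sigma>)"
        using cctrs_rule_vars(2)[OF assms(1) rule] conds(2) True by auto
      then have "labels_in R t" using labels_in_replace_at[OF \<open>labels_in R s\<close>] t by blast
      moreover have "cstep R (erase s) (erase t)"
      proof (rule cstep.intros)
        show "p \<in> poss (erase s)" "\<rho> \<in> R"
          using erase_redex(1)[OF \<open>is_pos p s\<close> apply_rule(4)] rule apply_rule(2) by simp_all
        show "erase s |_ p = lhs \<rho> \<cdot> (erase \<circ> \<sigma>)"
          using erase_redex(2)[OF \<open>is_pos p s\<close> apply_rule(4)] apply_rule(2) by (simp add: lhs_def)
        have "erase t = replace_at (erase s) p (erase (label R r \<cdot> \<sigma>))"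
          unfolding t erase_def by (rule replace_at_map_term)
        then show "erase t = replace_at (erase s) p (rhs \<rho> \<cdot> (erase \<circ> \<sigma>))"
          using apply_rule(2) by (simp add: rhs_def)
        show "\<forall>i < length (conds \<rho>). (cstep R)\<^sup>*\<^sup>* (fst (conds \<rho> ! i) \<cdot> (erase \<circ> \<sigma>))
            (snd (conds \<rho> ! i) \<cdot> (erase \<circ> \<sigma>))"
          using conds(1) True apply_rule(2) by (simp add: conds_def)
      qed
      ultimately show ?thesis by blast
    next
      case False
      then have "t = replace_at s p (Fun (Lab f (S - {\<rho>})) (map (\<lambda>l. label R l \<cdot> \<sigma>) ls))"
        using apply_rule(7) by simp
      then show ?thesis
        using erase_replace_label[OF \<open>is_pos p s\<close> apply_rule(4)]
          labels_in_replace_label[OF \<open>is_pos p s\<close> apply_rule(4) _ \<open>labels_in R s\<close>]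
        by auto
    qed
  qed
qed

lemma lstep_sub_imp_sqsup_erase:
  assumes "cctrs R" and "labels_in R s" and "lstep_sub R s t"
  shows "sqsup R (erase s) (erase t)"
proof -
  from assms(3) obtain p f ls r cs S \<sigma> j where
    "p \<in> poss s" "(Fun f ls, r, cs) \<in> S" and redex: "s |_ p = Fun (Lab f S) (map (\<lambda>l. label R l \<cdot> \<sigma>) ls)"
    and "j < length cs"
    and earlier: "\<forall>i < j. (lstep R)\<^sup>*\<^sup>* (label R (fst (cs ! i)) \<cdot> \<sigma>) (label R (snd (cs ! i)) \<cdot> \<sigma>)"
    and t: "t = label R (fst (cs ! j)) \<cdot> \<sigma>"
    unfolding lstep_sub_def by blast
  have "is_pos p s" using \<open>p \<in> poss s\<close> by (simp add: poss_def)
  note redex_labels = labels_in_redex[OF assms(2) this redex]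
  have rule: "(Fun f ls, r, cs) \<in> R" using redex_labels(1) \<open>(Fun f ls, r, cs) \<in> S\<close> by blast
  have conds: "\<forall>i < j. (cstep R)\<^sup>*\<^sup>* (fst (cs ! i) \<cdot> (erase \<circ> \<sigma>)) (snd (cs ! i) \<cdot> (erase \<circ> \<sigma>))"
    using erase_cond_steps[OF assms(1) rule redex_labels(2) less_imp_le[OF \<open>j < length cs\<close>] earlier]
      lstep_imp_cstep_erase[OF assms(1)] by blast
  show ?thesis
    unfolding sqsup_def
  proof (intro exI conjI)
    show "p \<in> poss (erase s)" "(Fun f ls, r, cs) \<in> R"
      using erase_redex(1)[OF \<open>is_pos p s\<close> redex] rule by simp_all
    show "erase s |_ p = lhs (Fun f ls, r, cs) \<cdot> (erase \<circ> \<sigma>)"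
      using erase_redex(2)[OF \<open>is_pos p s\<close> redex] by (simp add: lhs_def)
    show "j < length (conds (Fun f ls, r, cs))" using \<open>j < length cs\<close> by (simp add: conds_def)
    show "\<forall>i < j. (cstep R)\<^sup>*\<^sup>* (fst (conds (Fun f ls, r, cs) ! i) \<cdot> (erase \<circ> \<sigma>))
        (snd (conds (Fun f ls, r, cs) ! i) \<cdot> (erase \<circ> \<sigma>))"
      using conds by (simp add: conds_def)
    show "erase t = fst (conds (Fun f ls, r, cs) ! j) \<cdot> (erase \<circ> \<sigma>)"
      using t by (simp add: conds_def)
  qed
qed

theorem lemma4:
  fixes R :: "('f, 'v) crule set"
  assumes "infinite (UNIV :: 'v set)"
    and "cctrs R"
  shows "(\<forall>s t :: ('f, 'v) term. sqsup R s t \<longrightarrow> lstep_sub R (label R s) (label R t))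
       \<and> (\<forall>s t :: ('f, 'v) lterm. lterm_G R s \<longrightarrow> lterm_G R t \<longrightarrow> lstep_sub R s t
            \<longrightarrow> sqsup R (erase s) (erase t))"
  using sqsup_imp_lstep_sub_label[OF assms(2)]
    lstep_sub_imp_sqsup_erase[OF assms(2) labels_in_if_lterm_G] by blast

end
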